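(* Let $\mathcal{M}=\langle M,\circ,e\rangle$ be an effective mge monoid and let $\mathcal{T}=\langle \Sigma^*\times\mathcal{M},Q,I,F,\Delta\rangle$ be a functional real-time monoidal finite-state transducer with $\langle\varepsilon,e\rangle\in L(\mathcal{T})$. Then there is a bimachine $\mathcal{B}=\langle\mathcal{M},\mathcal{A}_L,\mathcal{A}_R,\psi\rangle$ such that $\mathcal{A}_L$ has at most $2^{|Q|}$ states, $\mathcal{A}_R$ has at most $2^{|Q|}$ states, and $O_{\mathcal{B}}=O_{\mathcal{T}}$ (as partial functions $\Sigma^*\to M$).
   Context: A monoid $\langle M,\circ,e\rangle$ has right cancellation if $ac=bc$ implies $a=b$. A tuple $\langle m_1,\dots,m_n\rangle\in M^n$ is equalizable if there is $\langle x_1,\dots,x_n\rangle\in M^n$ (an equalizer) with $m_1x_1=\dots=m_nx_n$; an instance of an equalizer $\langle x_1,\dots,x_n\rangle$ is any $\langle x_1x,\dots,x_nx\rangle$ with $x\in M$; a most general equalizer (mge) is an equalizer of which every equalizer is an instance. An mge monoid is a monoid with right cancellation in which every equalizable pair has an mge. An element $m$ is invertible if $mn=e$ for some $n$ (denoted $m^{-1}$). An mge monoid is effective if (i) $M$ is represented as a recursive subset of $\mathbb{N}$ with computable operation, (ii) equality is decidable, (iii) it is decidable whether a pair is equalizable and there is a computable function $\eta:M^2\to M^2$ with $\eta(m,m')$ an mge of $\langle m,m'\rangle$ for every equalizable pair, (iv) inverses of invertible elements are computable. A monoidal finite-state transducer is $\mathcal{T}=\langle\Sigma^*\times\mathcal{M},Q,I,F,\Delta\rangle$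 with $\Sigma$ a finite alphabet, $Q$ finite, $I,F\subseteq Q$, and finite $\Delta\subseteq Q\times((\Sigma\cup\{\varepsilon\})\times M)\times Q$; it is real-time if $\Delta\subseteq Q\times(\Sigma\times M)\times Q$. The generalized transition relation $\Delta^*$ is the least set containing $\langle q,\langle\varepsilon,e\rangle,q\rangle$ for all $q$ and closed under: $\langle q_1,\langle u,w\rangle,q_2\rangle\in\Delta^*$ and $\langle q_2,\langle a,m\rangle,q_3\rangle\in\Delta$ imply $\langle q_1,\langle ua,wm\rangle,q_3\rangle\in\Delta^*$. $L(\mathcal{T})=\{\langle u,m\rangle:\exists p\in I,q\in F,\ \langle p,\langle u,m\rangle,q\rangle\in\Delta^*\}$. $\mathcal{T}$ is functional if $L(\mathcal{T})$ is (the graph of) a partial function, denoted $O_{\mathcal{T}}:\Sigma^*\to M$. A bimachine is $\mathcal{B}=\langle\mathcal{M},\mathcal{A}_L,\mathcal{A}_R,\psi\rangle$ where $\mathcal{A}_L=\langle\Sigma,L,s_L,L,\delta_L\rangle$ and $\mathcal{A}_R=\langle\Sigma,R,s_R,R,\delta_R\rangle$ are deterministic finite automata (all states final) and $\psi:L\times\Sigma\times R\to M$ is a partial function. Define $\psi^*(l,\varepsilon,r)=e$ and $\psi^*(l,t\sigma,r)=\psi^*(l,t,\delta_R(r,\sigma))\circ\psi(\delta_L^*(l,t),\sigma,r)$; the function represented by $\mathcal{B}$ is $O_{\mathcal{B}}(t)=\psi^*(s_L,t,s_R)$ (partial). *)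

theory Defs
  imports Main
begin

definition right_cancel :: "('m::monoid_mult) itself \<Rightarrow> bool" where
  "right_cancel _ \<longleftrightarrow> (\<forall>a b c::'m. a * c = b * c \<longrightarrow> a = b)"

definition is_equalizer :: "'m::monoid_mult \<Rightarrow> 'm \<Rightarrow> 'm \<times> 'm \<Rightarrow> bool" where
  "is_equalizer m1 m2 x \<longleftrightarrow> m1 * fst x = m2 * snd x"

definition equalizable :: "'m::monoid_mult \<Rightarrow> 'm \<Rightarrow> bool" where
  "equalizable m1 m2 \<longleftrightarrow> (\<exists>x. is_equalizer m1 m2 x)"

definition is_instance :: "'m::monoid_mult \<times> 'm \<Rightarrow> 'm \<times> 'm \<Rightarrow> bool" where
  "is_instance y x \<longleftrightarrow> (\<exists>z. y = (fst x * z, snd x * z))"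

definition is_mge :: "'m::monoid_mult \<Rightarrow> 'm \<Rightarrow> 'm \<times> 'm \<Rightarrow> bool" where
  "is_mge m1 m2 x \<longleftrightarrow> is_equalizer m1 m2 x \<and> (\<forall>y. is_equalizer m1 m2 y \<longrightarrow> is_instance y x)"

definition mge_monoid :: "('m::monoid_mult) itself \<Rightarrow> bool" where
  "mge_monoid T \<longleftrightarrow> right_cancel T \<and>
     (\<forall>m1 m2::'m. equalizable m1 m2 \<longrightarrow> (\<exists>x. is_mge m1 m2 x))"

text \<open>Effectiveness: only the non-computational content is expressible:
  M is represented injectively in the naturals, and there are an mge-function eta and
  an inverse function on invertible elements.\<close>

definition effective_mge_monoid :: "('m::monoid_mult) itself \<Rightarrow> bool" where
  "effective_mge_monoid T \<longleftrightarrow> mge_monoid T \<and>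
     (\<exists>enc::'m \<Rightarrow> nat. inj enc) \<and>
     (\<exists>eta::'m \<Rightarrow> 'm \<Rightarrow> 'm \<times> 'm. \<forall>m1 m2. equalizable m1 m2 \<longrightarrow> is_mge m1 m2 (eta m1 m2)) \<and>
     (\<exists>inv::'m \<Rightarrow> 'm. \<forall>m::'m. (\<exists>n. m * n = 1) \<longrightarrow> m * inv m = 1)"

text \<open>Transitions are labelled by (a, m) with a :: 'a option (None = epsilon).\<close>

type_synonym ('q,'a,'m) trans = "('q \<times> ('a option \<times> 'm) \<times> 'q) set"

definition lbl :: "'a option \<Rightarrow> 'a list" where
  "lbl a = (case a of None \<Rightarrow> [] | Some s \<Rightarrow> [s])"

inductive_set gen_trans :: "('q,'a,'m::monoid_mult) trans \<Rightarrow> ('q \<times> ('a list \<times> 'm) \<times> 'q) set"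
  for Delta where
  refl: "(q, ([], 1), q) \<in> gen_trans Delta"
| step: "(q1, (u, w), q2) \<in> gen_trans Delta \<Longrightarrow> (q2, (a, m), q3) \<in> Delta \<Longrightarrow>
         (q1, (u @ lbl a, w * m), q3) \<in> gen_trans Delta"

definition is_transducer :: "'a set \<Rightarrow> 'q set \<Rightarrow> 'q set \<Rightarrow> 'q set \<Rightarrow> ('q,'a,'m::monoid_mult) trans \<Rightarrow> bool" where
  "is_transducer Sig Q I F Delta \<longleftrightarrow> finite Sig \<and> finite Q \<and> I \<subseteq> Q \<and> F \<subseteq> Q \<and> finite Delta \<and>
     (\<forall>(p, (a, m), q) \<in> Delta. p \<in> Q \<and> q \<in> Q \<and> (\<forall>s. a = Some s \<longrightarrow> s \<in> Sig))"

definition real_time :: "('q,'a,'m::monoid_mult) trans \<Rightarrow> bool" where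
  "real_time Delta \<longleftrightarrow> (\<forall>(p, (a, m), q) \<in> Delta. a \<noteq> None)"

definition lang :: "'q set \<Rightarrow> 'q set \<Rightarrow> ('q,'a,'m::monoid_mult) trans \<Rightarrow> ('a list \<times> 'm) set" where
  "lang I F Delta = {(u, m). \<exists>p\<in>I. \<exists>q\<in>F. (p, (u, m), q) \<in> gen_trans Delta}"

definition functional :: "'q set \<Rightarrow> 'q set \<Rightarrow> ('q,'a,'m::monoid_mult) trans \<Rightarrow> bool" where
  "functional I F Delta \<longleftrightarrow> (\<forall>u m m'. (u, m) \<in> lang I F Delta \<longrightarrow> (u, m') \<in> lang I F Delta \<longrightarrow> m = m')"

definition out_T :: "'q set \<Rightarrow> 'q set \<Rightarrow> ('q,'a,'m::monoid_mult) trans \<Rightarrow> 'a list \<Rightarrow> 'm option" where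
  "out_T I F Delta u = (if \<exists>m. (u, m) \<in> lang I F Delta then Some (THE m. (u, m) \<in> lang I F Delta) else None)"

definition is_dfa :: "'a set \<Rightarrow> 's set \<Rightarrow> 's \<Rightarrow> ('s \<Rightarrow> 'a \<Rightarrow> 's) \<Rightarrow> bool" where
  "is_dfa Sig S s0 delta \<longleftrightarrow> finite S \<and> s0 \<in> S \<and> (\<forall>s\<in>S. \<forall>a\<in>Sig. delta s a \<in> S)"

definition delta_star :: "('s \<Rightarrow> 'a \<Rightarrow> 's) \<Rightarrow> 's \<Rightarrow> 'a list \<Rightarrow> 's" where
  "delta_star delta s t = fold (\<lambda>a q. delta q a) t s"

text \<open>psi_rev works on the reversed word: psi*(l, t sigma, r) =
  psi*(l, t, deltaR(r,sigma)) o psi(deltaL*(l,t), sigma, r).\<close>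

fun psi_rev :: "('l \<Rightarrow> 'a \<Rightarrow> 'l) \<Rightarrow> ('r \<Rightarrow> 'a \<Rightarrow> 'r) \<Rightarrow> ('l \<Rightarrow> 'a \<Rightarrow> 'r \<Rightarrow> 'm::monoid_mult option)
                 \<Rightarrow> 'l \<Rightarrow> 'a list \<Rightarrow> 'r \<Rightarrow> 'm option" where
  "psi_rev dL dR psi l [] r = Some 1"
| "psi_rev dL dR psi l (s # ts) r =
     (case psi_rev dL dR psi l ts (dR r s) of
        None \<Rightarrow> None
      | Some m \<Rightarrow> (case psi (delta_star dL l (rev ts)) s r of
                    None \<Rightarrow> None
                  | Some m' \<Rightarrow> Some (m * m')))"

definition psi_star :: "('l \<Rightarrow> 'a \<Rightarrow> 'l) \<Rightarrow> ('r \<Rightarrow> 'a \<Rightarrow> 'r) \<Rightarrow> ('l \<Rightarrow> 'a \<Rightarrow> 'r \<Rightarrow> 'm::monoid_mult option)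
                 \<Rightarrow> 'l \<Rightarrow> 'a list \<Rightarrow> 'r \<Rightarrow> 'm option" where
  "psi_star dL dR psi l t r = psi_rev dL dR psi l (rev t) r"

definition out_B :: "'l \<Rightarrow> ('l \<Rightarrow> 'a \<Rightarrow> 'l) \<Rightarrow> 'r \<Rightarrow> ('r \<Rightarrow> 'a \<Rightarrow> 'r)
                 \<Rightarrow> ('l \<Rightarrow> 'a \<Rightarrow> 'r \<Rightarrow> 'm::monoid_mult option) \<Rightarrow> 'a list \<Rightarrow> 'm option" where
  "out_B sL dL sR dR psi t = psi_star dL dR psi sL t sR"

end

theory Submission
  imports Defs
begin

text \<open>Both automata of the bimachine are subset constructions: the left one tracks the set l of
  states reachable from I on the prefix t read so far, the right one the set r of states from
  which F is reachable on the rest u of the input. Every q in l \<inter> r lies on a successful run,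
  so by functionality the prefix outputs w(q) are equalized by the suffix outputs; an mge x of
  the family (w(q)) over l \<inter> r, which by right cancellation can be chosen depending only on l
  and r, makes w(q) x(q) independent of q. The output \<psi>(l, a, r) is the element z with
  x(p) z = n x'(q) along every a-transition p \<rightarrow> q with output n, where x' normalizes the
  successor pair; it exists because the family (n x'(q)) equalizes the w(p), hence is an
  instance of x. The bimachine output on t u is then w(q) x(q), which for u empty and
  q final is the transducer output.\<close>

section \<open>Most general equalizers\<close>

lemma mge_monoid_right_cancel:
  assumes "mge_monoid TYPE('m::monoid_mult)" and "a * c = b * (c::'m)"
  shows "a = b"
  using assms unfolding mge_monoid_def right_cancel_def by blast

text \<open>Left cancellation is not assumed: since (1,1) equalizes (a,a), right cancellation forces
  every mge of (a,a) to be of the form (x,x).\<close>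

lemma mge_monoid_left_cancel:
  assumes mge: "mge_monoid TYPE('m::monoid_mult)" and eq: "a * y1 = a * (y2::'m)"
  shows "y1 = y2"
proof -
  have "equalizable a a"
    using eq unfolding equalizable_def is_equalizer_def by (intro exI[of _ "(y1, y2)"]) simp
  then obtain x where x: "is_mge a a x"
    using mge unfolding mge_monoid_def by blast
  have "is_equalizer a a (1, 1)"
    by (simp add: is_equalizer_def)
  then obtain z where "fst x * z = snd x * z"
    using x unfolding is_mge_def is_instance_def by (metis prod.inject)
  then have diag: "fst x = snd x"
    using mge_monoid_right_cancel[OF mge] by blast
  have "is_equalizer a a (y1, y2)"
    using eq by (simp add: is_equalizer_def)
  then obtain k where "y1 = fst x * k" "y2 = snd x * k"
    using x unfolding is_mge_def is_instance_def by auto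
  then show ?thesis
    using diag by simp
qed

lemma mge_monoid_equalizer_transfer:
  assumes mge: "mge_monoid TYPE('m::monoid_mult)"
    and v: "a * v = b * (v'::'m)" "a' * v = b' * v'" and y: "a * y = b * y'"
  shows "a' * y = b' * y'"
proof -
  have "equalizable a b"
    using v unfolding equalizable_def is_equalizer_def by (intro exI[of _ "(v, v')"]) simp
  then obtain x where x: "is_mge a b x"
    using mge unfolding mge_monoid_def by blast
  obtain z' where z': "v = fst x * z'" "v' = snd x * z'"
    using x v(1) unfolding is_mge_def is_instance_def is_equalizer_def by fastforce
  obtain z where z: "y = fst x * z" "y' = snd x * z"
    using x y unfolding is_mge_def is_instance_def is_equalizer_def by fastforce
  have "(a' * fst x) * z' = (b' * snd x) * z'"
    using v(2) z' by (simp add: mult.assoc)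
  then have "a' * fst x = b' * snd x"
    using mge_monoid_right_cancel[OF mge] by blast
  then show ?thesis
    using z by (metis mult.assoc)
qed

definition equalizes_on :: "('q \<Rightarrow> 'm::monoid_mult) \<Rightarrow> 'q set \<Rightarrow> ('q \<Rightarrow> 'm) \<Rightarrow> bool" where
  "equalizes_on w X y \<longleftrightarrow> (\<forall>p\<in>X. \<forall>q\<in>X. w p * y p = w q * y q)"

definition mge_on :: "('q \<Rightarrow> 'm::monoid_mult) \<Rightarrow> 'q set \<Rightarrow> ('q \<Rightarrow> 'm) \<Rightarrow> bool" where
  "mge_on w X x \<longleftrightarrow> equalizes_on w X x \<and> (\<forall>y. equalizes_on w X y \<longrightarrow> (\<exists>z. \<forall>q\<in>X. y q = x q * z))"

lemma equalizes_on_transfer: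
  assumes mge: "mge_monoid TYPE('m::monoid_mult)"
    and "equalizes_on w X v" "equalizes_on w' X v" "equalizes_on w X (y::'q \<Rightarrow> 'm)"
  shows "equalizes_on w' X y"
  unfolding equalizes_on_def
proof (intro ballI)
  fix p q assume "p \<in> X" "q \<in> X"
  then have "w p * v p = w q * v q" "w' p * v p = w' q * v q" "w p * y p = w q * y q"
    using assms(2-4) unfolding equalizes_on_def by blast+
  then show "w' p * y p = w' q * y q"
    by (rule mge_monoid_equalizer_transfer[OF mge])
qed

lemma mge_on_transfer:
  assumes mge: "mge_monoid TYPE('m::monoid_mult)"
    and "equalizes_on w X v" "equalizes_on w' X v" "mge_on w X (x::'q \<Rightarrow> 'm)"
  shows "mge_on w' X x"
proof -
  have "equalizes_on w' X x"
    using assms(4) equalizes_on_transfer[OF mge assms(2,3)] unfolding mge_on_def by blast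
  moreover have "\<exists>z. \<forall>q\<in>X. y q = x q * z" if "equalizes_on w' X y" for y
    using assms(4) equalizes_on_transfer[OF mge assms(3,2) that] unfolding mge_on_def by blast
  ultimately show ?thesis
    unfolding mge_on_def by blast
qed

lemma mge_on_const_one:
  assumes mge: "mge_monoid TYPE('m::monoid_mult)" and const: "\<forall>p\<in>X. \<forall>q\<in>X. w p = (w q :: 'm)"
  shows "mge_on w X (\<lambda>_. 1)"
proof -
  have "equalizes_on w X (\<lambda>_. 1)"
    using const unfolding equalizes_on_def by (simp only: mult_1_right)
  moreover have "\<exists>z. \<forall>q\<in>X. y q = 1 * z" if y: "equalizes_on w X y" for y
  proof (cases "X = {}")
    case False
    then obtain q0 where q0: "q0 \<in> X" by blast
    have "y q = y q0" if q: "q \<in> X" for q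
    proof -
      have "w q * y q = w q0 * y q0" "w q = w q0"
        using y q0 q const unfolding equalizes_on_def by blast+
      then have "w q0 * y q = w q0 * y q0"
        by simp
      then show ?thesis
        by (rule mge_monoid_left_cancel[OF mge])
    qed
    then show ?thesis
      by (intro exI[of _ "y q0"]) simp
  qed simp
  ultimately show ?thesis
    unfolding mge_on_def by blast
qed

lemma mge_on_insert:
  assumes mge: "mge_monoid TYPE('m::monoid_mult)"
    and x: "mge_on w X x" and p0: "p0 \<in> X" and a: "a \<notin> X"
    and gh: "is_mge (w p0 * x p0) (w a) (g, h :: 'm)"
  shows "mge_on w (insert a X) (\<lambda>q. if q = a then h else x q * g)"
    (is "mge_on w _ ?x")
proof -
  have "equalizes_on w X x"
    using x unfolding mge_on_def by (rule conjunct1)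
  then have xc: "\<forall>p\<in>X. w p * x p = w p0 * x p0"
    using p0 unfolding equalizes_on_def by blast
  have ghe: "w p0 * x p0 * g = w a * h"
    using gh unfolding is_mge_def is_equalizer_def by simp
  have "w q * ?x q = w p0 * x p0 * g" if "q \<in> insert a X" for q
  proof (cases "q = a")
    case False
    then have "w q * ?x q = (w q * x q) * g"
      by (simp add: mult.assoc)
    then show ?thesis
      using xc that False by simp
  qed (simp add: ghe)
  then have "equalizes_on w (insert a X) ?x"
    unfolding equalizes_on_def by simp
  moreover have "\<exists>z. \<forall>q\<in>insert a X. y q = ?x q * z" if y: "equalizes_on w (insert a X) y" for y
  proof -
    have "equalizes_on w X y"
      using y unfolding equalizes_on_def by blast
    then obtain k where k: "\<forall>q\<in>X. y q = x q * k"
      using x unfolding mge_on_def by blast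
    have "w p0 * y p0 = w a * y a"
      using y p0 unfolding equalizes_on_def by blast
    then have "is_equalizer (w p0 * x p0) (w a) (k, y a)"
      using k p0 by (simp add: is_equalizer_def mult.assoc)
    then obtain z where z: "k = g * z" "y a = h * z"
      using gh unfolding is_mge_def is_instance_def by auto
    have "y q = ?x q * z" if "q \<in> insert a X" for q
      using that k z a by (cases "q = a") (simp_all add: mult.assoc)
    then show ?thesis
      by blast
  qed
  ultimately show ?thesis
    unfolding mge_on_def by blast
qed

lemma mge_on_exists:
  assumes mge: "mge_monoid TYPE('m::monoid_mult)" and "finite X" and "equalizes_on w X (y::'q \<Rightarrow> 'm)"
  shows "\<exists>x. mge_on w X x"
  using assms(2,3)
proof (induction X arbitrary: y rule: finite_induct)
  case empty
  show ?case
    by (rule exI, rule mge_on_const_one[OF mge]) simp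
next
  case (insert a X)
  then have "equalizes_on w X y"
    unfolding equalizes_on_def by blast
  then obtain x where x: "mge_on w X x"
    using insert.IH by blast
  show ?case
  proof (cases "X = {}")
    case True
    show ?thesis
      by (rule exI, rule mge_on_const_one[OF mge]) (simp add: True)
  next
    case False
    then obtain p0 where p0: "p0 \<in> X" by blast
    obtain z0 where "\<forall>q\<in>X. y q = x q * z0"
      using x \<open>equalizes_on w X y\<close> unfolding mge_on_def by blast
    moreover have "w p0 * y p0 = w a * y a"
      using insert.prems p0 unfolding equalizes_on_def by blast
    ultimately have "is_equalizer (w p0 * x p0) (w a) (z0, y a)"
      using p0 by (simp add: is_equalizer_def mult.assoc)
    then have "\<exists>gh. is_mge (w p0 * x p0) (w a) gh"
      using mge unfolding mge_monoid_def equalizable_def by blast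
    then obtain g h where "is_mge (w p0 * x p0) (w a) (g, h)"
      by auto
    then show ?thesis
      using mge_on_insert[OF mge x p0 insert.hyps(2)] by blast
  qed
qed

section \<open>Runs of real-time transducers\<close>

lemma gen_trans_Nil_iff:
  assumes "real_time Delta"
  shows "(p, ([], m), q) \<in> gen_trans Delta \<longleftrightarrow> p = q \<and> m = 1"
proof
  assume "(p, ([], m), q) \<in> gen_trans Delta"
  then show "p = q \<and> m = 1"
    by (cases rule: gen_trans.cases)
      (use assms in \<open>auto simp: real_time_def lbl_def split: option.splits\<close>)
qed (auto intro: gen_trans.refl)

lemma gen_trans_snoc_iff:
  assumes "real_time Delta"
  shows "(p, (u @ [a], m), q) \<in> gen_trans Delta \<longleftrightarrow>
    (\<exists>s m1 m2. (p, (u, m1), s) \<in> gen_trans Delta \<and> (s, (Some a, m2), q) \<in> Delta \<and> m = m1 * m2)"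
proof
  assume "(p, (u @ [a], m), q) \<in> gen_trans Delta"
  then show "\<exists>s m1 m2. (p, (u, m1), s) \<in> gen_trans Delta \<and> (s, (Some a, m2), q) \<in> Delta \<and> m = m1 * m2"
    by (cases rule: gen_trans.cases)
      (use assms in \<open>auto simp: real_time_def lbl_def split: option.splits\<close>)
next
  assume "\<exists>s m1 m2. (p, (u, m1), s) \<in> gen_trans Delta \<and> (s, (Some a, m2), q) \<in> Delta \<and> m = m1 * m2"
  then show "(p, (u @ [a], m), q) \<in> gen_trans Delta"
    using gen_trans.step[of p u _ _ Delta "Some a"] by (auto simp: lbl_def)
qed

lemma gen_trans_append_iff:
  assumes rt: "real_time Delta"
  shows "(p, (u @ v, m), q) \<in> gen_trans Delta \<longleftrightarrow>
    (\<exists>s m1 m2. (p, (u, m1), s) \<in> gen_trans Delta \<and> (s, (v, m2), q) \<in> gen_trans Delta \<and> m = m1 * m2)"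
proof (induction v arbitrary: m q rule: rev_induct)
  case Nil
  show ?case
    by (auto simp: gen_trans_Nil_iff[OF rt])
next
  case (snoc x v)
  have "(p, (u @ v @ [x], m), q) \<in> gen_trans Delta \<longleftrightarrow>
    (\<exists>s' s n1 n2 m2. (p, (u, n1), s') \<in> gen_trans Delta \<and> (s', (v, n2), s) \<in> gen_trans Delta \<and>
       (s, (Some x, m2), q) \<in> Delta \<and> m = n1 * n2 * m2)"
    using gen_trans_snoc_iff[OF rt, of p "u @ v" x m q] by (simp add: snoc.IH) blast
  also have "\<dots> \<longleftrightarrow>
    (\<exists>s' n1 k. (p, (u, n1), s') \<in> gen_trans Delta \<and> (s', (v @ [x], k), q) \<in> gen_trans Delta \<and> m = n1 * k)"
    by (simp add: gen_trans_snoc_iff[OF rt] mult.assoc) blast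
  finally show ?case
    by simp
qed

lemma gen_trans_Cons_iff:
  assumes rt: "real_time Delta"
  shows "(p, (a # u, m), q) \<in> gen_trans Delta \<longleftrightarrow>
    (\<exists>s m1 m2. (p, (Some a, m1), s) \<in> Delta \<and> (s, (u, m2), q) \<in> gen_trans Delta \<and> m = m1 * m2)"
proof -
  have "(p, ([a], m1), s) \<in> gen_trans Delta \<longleftrightarrow> (p, (Some a, m1), s) \<in> Delta" for m1 s
    using gen_trans_snoc_iff[OF rt, of p "[]" a m1 s] by (simp add: gen_trans_Nil_iff[OF rt])
  then show ?thesis
    using gen_trans_append_iff[OF rt, of p "[a]" u m q] by simp
qed

section \<open>Bimachines over encoded states\<close>

lemma delta_star_Cons: "delta_star d s (a # t) = delta_star d (d s a) t"
  by (simp add: delta_star_def)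

lemma delta_star_snoc: "delta_star d s (t @ [a]) = d (delta_star d s t) a"
  by (simp add: delta_star_def)

lemma psi_star_Nil: "psi_star dL dR psi l [] r = Some 1"
  by (simp add: psi_star_def)

lemma psi_star_snoc:
  "psi_star dL dR psi l (t @ [a]) r =
    (case psi_star dL dR psi l t (dR r a) of
       None \<Rightarrow> None
     | Some m \<Rightarrow> (case psi (delta_star dL l t) a r of None \<Rightarrow> None | Some m' \<Rightarrow> Some (m * m')))"
  unfolding psi_star_def by (simp only: rev_append rev.simps append.simps psi_rev.simps rev_rev_ident)

definition transport_dfa :: "('s \<Rightarrow> 'n) \<Rightarrow> 's set \<Rightarrow> ('s \<Rightarrow> 'a \<Rightarrow> 's) \<Rightarrow> 'n \<Rightarrow> 'a \<Rightarrow> 'n" where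
  "transport_dfa enc S d n a = enc (d (inv_into S enc n) a)"

lemma transport_dfa_apply:
  "inj_on enc S \<Longrightarrow> s \<in> S \<Longrightarrow> transport_dfa enc S d (enc s) a = enc (d s a)"
  by (simp add: transport_dfa_def)

lemma delta_star_closed:
  assumes "\<forall>s a. d s a \<in> S" and "s \<in> S"
  shows "delta_star d s t \<in> S"
  using assms by (induction t rule: rev_induct) (auto simp: delta_star_snoc delta_star_def)

lemma delta_star_transport:
  assumes inj: "inj_on enc S" and closed: "\<forall>s a. d s a \<in> S" and s: "s \<in> S"
  shows "delta_star (transport_dfa enc S d) (enc s) t = enc (delta_star d s t)"
  using s
proof (induction t arbitrary: s)
  case (Cons a t)
  then show ?case
    using closed by (simp add: delta_star_Cons transport_dfa_apply[OF inj])
qed (simp add: delta_star_def)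

lemma psi_rev_transport:
  assumes inj: "inj_on enc S" and closed: "\<forall>s a. dL s a \<in> S" "\<forall>s a. dR s a \<in> S"
    and l: "l \<in> S" and r: "r \<in> S"
  shows "psi_rev (transport_dfa enc S dL) (transport_dfa enc S dR)
      (\<lambda>n a n'. psi (inv_into S enc n) a (inv_into S enc n')) (enc l) ts (enc r)
    = psi_rev dL dR psi l ts r"
  using r
proof (induction ts arbitrary: r)
  case (Cons a ts)
  have "inv_into S enc (delta_star (transport_dfa enc S dL) (enc l) (rev ts)) = delta_star dL l (rev ts)"
    using delta_star_closed[OF closed(1) l]
    by (simp add: delta_star_transport[OF inj closed(1) l] inv_into_f_f[OF inj])
  then show ?case
    using Cons closed by (simp add: transport_dfa_apply[OF inj] inv_into_f_f[OF inj] split: option.split)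
qed simp

lemma out_B_transport:
  assumes "inj_on enc S" "\<forall>s a. dL s a \<in> S" "\<forall>s a. dR s a \<in> S" "sL \<in> S" "sR \<in> S"
  shows "out_B (enc sL) (transport_dfa enc S dL) (enc sR) (transport_dfa enc S dR)
      (\<lambda>n a n'. psi (inv_into S enc n) a (inv_into S enc n')) t
    = out_B sL dL sR dR psi t"
  unfolding out_B_def psi_star_def using psi_rev_transport[OF assms] .

lemma nat_bimachine_of_finite:
  fixes S :: "'s set" and psi :: "'s \<Rightarrow> 'a \<Rightarrow> 's \<Rightarrow> 'm::monoid_mult option"
  assumes fin: "finite S" and start: "sL \<in> S" "sR \<in> S"
    and closed: "\<forall>s a. dL s a \<in> S" "\<forall>s a. dR s a \<in> S"
  shows "\<exists>(L::nat set) sL' dL' (R::nat set) sR' dR' (psi' :: nat \<Rightarrow> 'a \<Rightarrow> nat \<Rightarrow> 'm option).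
     is_dfa Sig L sL' dL' \<and> is_dfa Sig R sR' dR' \<and> card L \<le> card S \<and> card R \<le> card S \<and>
     (\<forall>t. out_B sL' dL' sR' dR' psi' t = out_B sL dL sR dR psi t)"
proof -
  obtain enc :: "'s \<Rightarrow> nat" where inj: "inj_on enc S"
    using finite_imp_inj_to_nat_seg[OF fin] by blast
  have dfa: "is_dfa Sig (enc ` S) (enc s) (transport_dfa enc S d)" if "s \<in> S" "\<forall>s a. d s a \<in> S" for s d
    using that fin by (auto simp: is_dfa_def transport_dfa_def)
  show ?thesis
    using dfa[OF start(1) closed(1)] dfa[OF start(2) closed(2)] card_image_le[OF fin, of enc]
      out_B_transport[OF inj closed start, of psi]
    by blast
qed

section \<open>The bimachine of a functional real-time transducer\<close>

locale functional_rt_transducer =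
  fixes Sig :: "'a set" and Q I F :: "'q set" and Delta :: "('q, 'a, 'm::monoid_mult) trans"
  assumes mge: "mge_monoid TYPE('m)"
    and transducer: "is_transducer Sig Q I F Delta"
    and rt: "real_time Delta"
    and functional: "functional I F Delta"
begin

definition post :: "'q set \<Rightarrow> 'a \<Rightarrow> 'q set" where
  "post S a = {q. \<exists>p\<in>S. \<exists>m. (p, (Some a, m), q) \<in> Delta}"

definition pre :: "'q set \<Rightarrow> 'a \<Rightarrow> 'q set" where
  "pre S a = {p. \<exists>q\<in>S. \<exists>m. (p, (Some a, m), q) \<in> Delta}"

lemma post_subset: "post S a \<subseteq> Q" and pre_subset: "pre S a \<subseteq> Q"
  using transducer unfolding is_transducer_def post_def pre_def by fastforce+

definition reach :: "'a list \<Rightarrow> 'q set" where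
  "reach t = delta_star post I t"

definition coreach :: "'a list \<Rightarrow> 'q set" where
  "coreach u = delta_star pre F (rev u)"

lemma reach_Nil: "reach [] = I"
  by (simp add: reach_def delta_star_def)

lemma reach_snoc: "reach (t @ [a]) = post (reach t) a"
  by (simp add: reach_def delta_star_snoc)

lemma coreach_Nil: "coreach [] = F"
  by (simp add: coreach_def delta_star_def)

lemma coreach_Cons: "coreach (a # u) = pre (coreach u) a"
  by (simp add: coreach_def delta_star_snoc)

lemma finite_reach: "finite (reach t)"
proof -
  have "reach t \<in> Pow Q"
    unfolding reach_def using post_subset transducer
    by (intro delta_star_closed) (auto simp: is_transducer_def)
  then show ?thesis
    using transducer finite_subset unfolding is_transducer_def by auto
qed

lemma reach_iff: "q \<in> reach t \<longleftrightarrow> (\<exists>p\<in>I. \<exists>m. (p, (t, m), q) \<in> gen_trans Delta)"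
proof (induction t arbitrary: q rule: rev_induct)
  case Nil
  then show ?case
    by (auto simp: reach_Nil gen_trans_Nil_iff[OF rt])
next
  case (snoc a t)
  then show ?case
    unfolding reach_snoc post_def gen_trans_snoc_iff[OF rt] by blast
qed

lemma coreach_iff: "p \<in> coreach u \<longleftrightarrow> (\<exists>f\<in>F. \<exists>v. (p, (u, v), f) \<in> gen_trans Delta)"
proof (induction u arbitrary: p)
  case Nil
  then show ?case
    by (auto simp: coreach_Nil gen_trans_Nil_iff[OF rt])
next
  case (Cons a u)
  then show ?case
    unfolding coreach_Cons pre_def gen_trans_Cons_iff[OF rt] by blast
qed

definition out_pre :: "'a list \<Rightarrow> 'q \<Rightarrow> 'm" where
  "out_pre t q = (SOME m. \<exists>p\<in>I. (p, (t, m), q) \<in> gen_trans Delta)"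

definition out_suf :: "'a list \<Rightarrow> 'q \<Rightarrow> 'm" where
  "out_suf u q = (SOME v. \<exists>f\<in>F. (q, (u, v), f) \<in> gen_trans Delta)"

lemma out_pre_path: "q \<in> reach t \<Longrightarrow> \<exists>p\<in>I. (p, (t, out_pre t q), q) \<in> gen_trans Delta"
  unfolding out_pre_def reach_iff by (rule someI_ex) blast

lemma out_suf_path: "q \<in> coreach u \<Longrightarrow> \<exists>f\<in>F. (q, (u, out_suf u q), f) \<in> gen_trans Delta"
  unfolding out_suf_def coreach_iff by (rule someI_ex) blast

lemma out_pre_Nil: "q \<in> I \<Longrightarrow> out_pre [] q = 1"
  using out_pre_path[of q "[]"] by (auto simp: reach_Nil gen_trans_Nil_iff[OF rt])

lemma lang_append:
  "p \<in> I \<Longrightarrow> (p, (t, m), q) \<in> gen_trans Delta \<Longrightarrow> f \<in> F \<Longrightarrow> (q, (u, v), f) \<in> gen_trans Delta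
    \<Longrightarrow> (t @ u, m * v) \<in> lang I F Delta"
  unfolding lang_def using gen_trans_append_iff[OF rt] by blast

lemma out_pre_out_suf_lang:
  "q \<in> reach t \<Longrightarrow> q \<in> coreach u \<Longrightarrow> (t @ u, out_pre t q * out_suf u q) \<in> lang I F Delta"
  using out_pre_path out_suf_path lang_append by blast

lemma out_pre_lang: "q \<in> reach t \<inter> F \<Longrightarrow> (t, out_pre t q) \<in> lang I F Delta"
  using out_pre_path unfolding lang_def by blast

lemma out_pre_unique:
  assumes p: "p \<in> I" and run: "(p, (t, m), q) \<in> gen_trans Delta" and q: "q \<in> coreach u"
  shows "m = out_pre t q"
proof -
  have "q \<in> reach t"
    using p run reach_iff by blast
  then obtain p' where p': "p' \<in> I" "(p', (t, out_pre t q), q) \<in> gen_trans Delta"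
    using out_pre_path by blast
  obtain f v where f: "f \<in> F" "(q, (u, v), f) \<in> gen_trans Delta"
    using q coreach_iff by blast
  have "(t @ u, m * v) \<in> lang I F Delta" "(t @ u, out_pre t q * v) \<in> lang I F Delta"
    using lang_append p run p' f by blast+
  then have "m * v = out_pre t q * v"
    using functional unfolding functional_def by blast
  then show ?thesis
    by (rule mge_monoid_right_cancel[OF mge])
qed

lemma out_pre_snoc:
  assumes "p \<in> reach t" and "q \<in> coreach u" and "(p, (Some a, n), q) \<in> Delta"
  shows "out_pre t p * n = out_pre (t @ [a]) q"
proof -
  obtain i where "i \<in> I" "(i, (t, out_pre t p), p) \<in> gen_trans Delta"
    using out_pre_path assms(1) by blast
  then have "(i, (t @ [a], out_pre t p * n), q) \<in> gen_trans Delta"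
    using assms(3) gen_trans_snoc_iff[OF rt] by blast
  then show ?thesis
    using out_pre_unique \<open>i \<in> I\<close> assms(2) by blast
qed

lemma equalizes_on_out_suf: "equalizes_on (out_pre t) (reach t \<inter> coreach u) (out_suf u)"
  unfolding equalizes_on_def using out_pre_out_suf_lang functional unfolding functional_def by blast

lemma mge_on_reach_transfer:
  assumes "reach t = reach t'" and "mge_on (out_pre t) (reach t \<inter> coreach u) x"
  shows "mge_on (out_pre t') (reach t \<inter> coreach u) x"
  using mge_on_transfer[OF mge equalizes_on_out_suf] equalizes_on_out_suf[of t' u] assms by metis

definition normalizes :: "'q set \<Rightarrow> 'q set \<Rightarrow> ('q \<Rightarrow> 'm) \<Rightarrow> bool" where
  "normalizes l r x \<longleftrightarrow> (\<forall>t. reach t = l \<longrightarrow> mge_on (out_pre t) (l \<inter> r) x)"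

text \<open>Preferring the constant 1 makes the normalizer trivial at the initial left state and at the
  final right state, so the bimachine needs no separate initial or final output.\<close>

definition normalizer :: "'q set \<Rightarrow> 'q set \<Rightarrow> 'q \<Rightarrow> 'm" where
  "normalizer l r = (if normalizes l r (\<lambda>_. 1) then (\<lambda>_. 1) else Eps (normalizes l r))"

lemma normalizes_reach_coreach: "\<exists>x. normalizes (reach t) (coreach u) x"
proof -
  obtain x where "mge_on (out_pre t) (reach t \<inter> coreach u) x"
    using mge_on_exists[OF mge _ equalizes_on_out_suf] finite_reach by blast
  then have "normalizes (reach t) (coreach u) x"
    unfolding normalizes_def using mge_on_reach_transfer by blast
  then show ?thesis
    by blast
qed

lemma normalizer_mge: "mge_on (out_pre t) (reach t \<inter> coreach u) (normalizer (reach t) (coreach u))"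
proof -
  have "normalizes (reach t) (coreach u) (normalizer (reach t) (coreach u))"
    using someI_ex[OF normalizes_reach_coreach] unfolding normalizer_def by auto
  then show ?thesis
    unfolding normalizes_def by blast
qed

lemma normalizer_initial: "normalizer I (coreach u) = (\<lambda>_. 1)"
proof -
  have "mge_on (out_pre []) (reach [] \<inter> coreach u) (\<lambda>_. 1)"
    by (rule mge_on_const_one[OF mge]) (simp add: reach_Nil out_pre_Nil)
  then have "normalizes I (coreach u) (\<lambda>_. 1)"
    unfolding normalizes_def using mge_on_reach_transfer reach_Nil by metis
  then show ?thesis
    unfolding normalizer_def by simp
qed

lemma normalizer_final: "normalizer (reach t) F = (\<lambda>_. 1)"
proof -
  have "mge_on (out_pre t') (reach t \<inter> F) (\<lambda>_. 1)" if "reach t' = reach t" for t'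
  proof (rule mge_on_const_one[OF mge], intro ballI)
    fix p q assume "p \<in> reach t \<inter> F" "q \<in> reach t \<inter> F"
    then have "(t', out_pre t' p) \<in> lang I F Delta" "(t', out_pre t' q) \<in> lang I F Delta"
      using out_pre_lang that by auto
    then show "out_pre t' p = out_pre t' q"
      using functional unfolding functional_def by blast
  qed
  then have "normalizes (reach t) F (\<lambda>_. 1)"
    unfolding normalizes_def by blast
  then show ?thesis
    unfolding normalizer_def by simp
qed

definition psi_sets :: "'q set \<Rightarrow> 'a \<Rightarrow> 'q set \<Rightarrow> 'm option" where
  "psi_sets l a r = (if post l a \<inter> r = {} then None else Some (SOME z. \<forall>p q n.
      p \<in> l \<inter> pre r a \<longrightarrow> q \<in> post l a \<inter> r \<longrightarrow> (p, (Some a, n), q) \<in> Delta \<longrightarrow>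
      normalizer l (pre r a) p * z = n * normalizer (post l a) r q))"

text \<open>Left cancellation makes a single z work for every a-transition, not just for the one chosen
  at each source state.\<close>

lemma psi_sets_spec:
  assumes ne: "reach (t @ [a]) \<inter> coreach u \<noteq> {}"
  obtains z where "psi_sets (reach t) a (coreach u) = Some z"
    and "\<And>p q n. p \<in> reach t \<inter> coreach (a # u) \<Longrightarrow> q \<in> reach (t @ [a]) \<inter> coreach u \<Longrightarrow>
      (p, (Some a, n), q) \<in> Delta \<Longrightarrow>
      normalizer (reach t) (coreach (a # u)) p * z = n * normalizer (reach (t @ [a])) (coreach u) q"
proof -
  define x where "x = normalizer (reach t) (coreach (a # u))"
  define x' where "x' = normalizer (reach (t @ [a])) (coreach u)"
  obtain q0 where q0: "q0 \<in> reach (t @ [a]) \<inter> coreach u"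
    using ne by blast
  define K where "K = out_pre (t @ [a]) q0 * x' q0"
  have through: "out_pre t p * (n * x' q) = K"
    if "p \<in> reach t" "q \<in> reach (t @ [a]) \<inter> coreach u" "(p, (Some a, n), q) \<in> Delta" for p q n
  proof -
    have "out_pre t p * (n * x' q) = out_pre (t @ [a]) q * x' q"
      using out_pre_snoc[of p t q u a n] that by (simp add: mult.assoc[symmetric])
    also have "\<dots> = K"
      using normalizer_mge[of "t @ [a]" u] that(2) q0 unfolding K_def x'_def mge_on_def equalizes_on_def
      by blast
    finally show ?thesis .
  qed
  have "\<forall>p\<in>reach t \<inter> coreach (a # u). \<exists>v. \<exists>n q. q \<in> reach (t @ [a]) \<inter> coreach u \<and>
      (p, (Some a, n), q) \<in> Delta \<and> v = n * x' q"
    unfolding reach_snoc coreach_Cons pre_def post_def by blast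
  from bchoice[OF this] obtain y where y: "\<forall>p\<in>reach t \<inter> coreach (a # u). \<exists>n q. q \<in> reach (t @ [a]) \<inter> coreach u \<and>
      (p, (Some a, n), q) \<in> Delta \<and> y p = n * x' q" ..
  have yK: "out_pre t p * y p = K" if p: "p \<in> reach t \<inter> coreach (a # u)" for p
  proof -
    obtain n q where "q \<in> reach (t @ [a]) \<inter> coreach u" "(p, (Some a, n), q) \<in> Delta" "y p = n * x' q"
      using y p by blast
    then show ?thesis
      using through[of p q n] p by simp
  qed
  have "equalizes_on (out_pre t) (reach t \<inter> coreach (a # u)) y"
    unfolding equalizes_on_def using yK by simp
  then obtain z where z: "\<And>p. p \<in> reach t \<inter> coreach (a # u) \<Longrightarrow> y p = x p * z"
    using normalizer_mge[of t "a # u"] unfolding mge_on_def x_def by blast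
  have "x p * z = n * x' q"
    if "p \<in> reach t \<inter> coreach (a # u)" "q \<in> reach (t @ [a]) \<inter> coreach u" "(p, (Some a, n), q) \<in> Delta"
    for p q n
  proof -
    have "out_pre t p * (x p * z) = out_pre t p * (n * x' q)"
      using yK[OF that(1)] z[OF that(1)] through that by simp
    then show ?thesis
      by (rule mge_monoid_left_cancel[OF mge])
  qed
  then have "\<exists>z. \<forall>p q n. p \<in> reach t \<inter> pre (coreach u) a \<longrightarrow> q \<in> post (reach t) a \<inter> coreach u \<longrightarrow>
      (p, (Some a, n), q) \<in> Delta \<longrightarrow>
      normalizer (reach t) (pre (coreach u) a) p * z = n * normalizer (post (reach t) a) (coreach u) q"
    unfolding x_def x'_def reach_snoc coreach_Cons by blast
  from someI_ex[OF this] show ?thesis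
    using that ne unfolding psi_sets_def reach_snoc coreach_Cons by auto
qed

lemma psi_star_reach_coreach:
  "q \<in> reach t \<inter> coreach u \<Longrightarrow>
    psi_star post pre psi_sets I t (coreach u) = Some (out_pre t q * normalizer (reach t) (coreach u) q)"
proof (induction t arbitrary: u q rule: rev_induct)
  case Nil
  then show ?case
    by (simp add: psi_star_Nil out_pre_Nil reach_Nil normalizer_initial)
next
  case (snoc a t)
  from snoc.prems obtain p n where p: "p \<in> reach t" and tr: "(p, (Some a, n), q) \<in> Delta"
    unfolding reach_snoc post_def by blast
  have p': "p \<in> reach t \<inter> coreach (a # u)"
    using p tr snoc.prems unfolding coreach_Cons pre_def by blast
  have "reach (t @ [a]) \<inter> coreach u \<noteq> {}"
    using snoc.prems by blast
  then obtain z where z: "psi_sets (reach t) a (coreach u) = Some z"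
    and spec: "\<And>p q n. p \<in> reach t \<inter> coreach (a # u) \<Longrightarrow> q \<in> reach (t @ [a]) \<inter> coreach u \<Longrightarrow>
      (p, (Some a, n), q) \<in> Delta \<Longrightarrow>
      normalizer (reach t) (coreach (a # u)) p * z = n * normalizer (reach (t @ [a])) (coreach u) q"
    by (rule psi_sets_spec) auto
  have "out_pre t p * normalizer (reach t) (coreach (a # u)) p * z
      = out_pre t p * (n * normalizer (reach (t @ [a])) (coreach u) q)"
    using spec[OF p' snoc.prems tr] by (simp add: mult.assoc)
  also have "\<dots> = out_pre (t @ [a]) q * normalizer (reach (t @ [a])) (coreach u) q"
    using out_pre_snoc[OF p _ tr, of u] snoc.prems by (simp add: mult.assoc[symmetric])
  finally show ?case
    using snoc.IH[OF p'] z
    by (simp add: psi_star_snoc coreach_Cons[symmetric] reach_def[symmetric])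
qed

lemma psi_star_correct:
  assumes empty: "([], 1) \<in> lang I F Delta"
  shows "psi_star post pre psi_sets I t F = out_T I F Delta t"
proof (cases "reach t \<inter> F = {}")
  case False
  then obtain q where q: "q \<in> reach t \<inter> F" by blast
  then have "(t, out_pre t q) \<in> lang I F Delta"
    by (rule out_pre_lang)
  then have "out_T I F Delta t = Some (out_pre t q)"
    using functional unfolding out_T_def functional_def by auto
  then show ?thesis
    using psi_star_reach_coreach[of q t "[]"] q by (simp add: coreach_Nil normalizer_final)
next
  case True
  then have "(t, m) \<notin> lang I F Delta" for m
    unfolding lang_def using reach_iff by blast
  then have "out_T I F Delta t = None"
    by (simp add: out_T_def)
  moreover obtain s a where t: "t = s @ [a]"
  proof (cases t rule: rev_exhaust)
    case Nil
    then show ?thesis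
      using True empty unfolding lang_def by (auto simp: reach_Nil gen_trans_Nil_iff[OF rt])
  qed
  then have "psi_star post pre psi_sets I t F = None"
    using True by (simp add: psi_star_snoc psi_sets_def reach_snoc reach_def[symmetric] split: option.split)
  ultimately show ?thesis
    by simp
qed

end

theorem theorem1:
  fixes Sig :: "'a set" and Q I F :: "'q set" and Delta :: "('q,'a,'m::monoid_mult) trans"
  assumes "effective_mge_monoid TYPE('m)"
    and "is_transducer Sig Q I F Delta"
    and "real_time Delta"
    and "functional I F Delta"
    and "([], 1) \<in> lang I F Delta"
  shows "\<exists>(L::nat set) sL dL (R::nat set) sR dR (psi :: nat \<Rightarrow> 'a \<Rightarrow> nat \<Rightarrow> 'm option).
           is_dfa Sig L sL dL \<and> is_dfa Sig R sR dR \<and>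
           card L \<le> 2 ^ card Q \<and> card R \<le> 2 ^ card Q \<and>
           (\<forall>t. set t \<subseteq> Sig \<longrightarrow> out_B sL dL sR dR psi t = out_T I F Delta t)"
proof -
  interpret functional_rt_transducer Sig Q I F Delta
    using assms(1-4) unfolding effective_mge_monoid_def by unfold_locales auto
  have "finite Q" "I \<subseteq> Q" "F \<subseteq> Q"
    using assms(2) unfolding is_transducer_def by auto
  then obtain L sL dL R sR dR and psi :: "nat \<Rightarrow> 'a \<Rightarrow> nat \<Rightarrow> 'm option" where
    "is_dfa Sig L sL dL" "is_dfa Sig R sR dR" "card L \<le> card (Pow Q)" "card R \<le> card (Pow Q)"
    and out: "\<And>t. out_B sL dL sR dR psi t = out_B I post F pre psi_sets t"
    using nat_bimachine_of_finite[where S="Pow Q" and psi=psi_sets and sL=I and sR=F and dL=post and dR=pre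
        and Sig=Sig] post_subset pre_subset by blast
  moreover have "card (Pow Q) = 2 ^ card Q"
    using \<open>finite Q\<close> by (rule card_Pow)
  moreover have "out_B sL dL sR dR psi t = out_T I F Delta t" for t
    using out[of t] psi_star_correct[OF assms(5), of t] by (simp add: out_B_def)
  ultimately show ?thesis
    by metis
qed

end
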